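(* Let $V$ be a finite-dimensional real vector space, $\phi\in\mathrm{End}(V)\setminus\{0\}$ and $W=\mathrm{im}(\phi)$. Then the map \[V^*\oplus C_{sl}(W)\to\mathcal{Q}(\mathfrak{g}_\phi),\quad(\alpha,c)\mapsto\zeta_{\alpha,c}\] is a linear isomorphism, where $\zeta_{\alpha,c}(v,t)=c(\phi(v)/t)\,t+\alpha(v)$ for $t\ne 0$ and $\zeta_{\alpha,c}(v,0)=\alpha(v)$. In particular $\mathcal{Q}(\mathfrak{g}_\phi)$ is infinite-dimensional.
   Context: $\mathfrak{g}_\phi$ is $V\times\mathbb{R}$ with bracket $[(v,s),(w,t)]=(s\phi(w)-t\phi(v),0)$. $\mathcal{Q}(\mathfrak{g}_\phi)$ is the space of continuous Lie quasi-states, i.e. continuous $\zeta:\mathfrak{g}_\phi\to\mathbb{R}$ with $\zeta(aX+bY)=a\zeta(X)+b\zeta(Y)$ for all $a,b\in\mathbb{R}$ and commuting $X,Y$. $C_{sl}(W)$ is the space of continuous sublinear functions $c:W\to\mathbb{R}$, i.e. $c(w)/\|w\|\to 0$ as $w\to\infty$. *)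

theory Defs
  imports "HOL-Analysis.Analysis"
begin

definition gbracket :: "('v::real_vector \<Rightarrow> 'v) \<Rightarrow> 'v \<times> real \<Rightarrow> 'v \<times> real \<Rightarrow> 'v \<times> real" where
  "gbracket \<phi> X Y = (snd X *\<^sub>R \<phi> (fst Y) - snd Y *\<^sub>R \<phi> (fst X), 0)"


definition gcommute :: "('v::real_vector \<Rightarrow> 'v) \<Rightarrow> 'v \<times> real \<Rightarrow> 'v \<times> real \<Rightarrow> bool" where
  "gcommute \<phi> X Y \<longleftrightarrow> gbracket \<phi> X Y = 0"

definition lie_quasi_states :: "('v::real_normed_vector \<Rightarrow> 'v) \<Rightarrow> (('v \<times> real) \<Rightarrow> real) set" where
  "lie_quasi_states \<phi> = {\<zeta>. continuous_on UNIV \<zeta> \<and>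
     (\<forall>X Y (a::real) (b::real). gcommute \<phi> X Y \<longrightarrow> \<zeta> (a *\<^sub>R X + b *\<^sub>R Y) = a * \<zeta> X + b * \<zeta> Y)}"

text \<open>Continuous sublinear functions on a subset W (represented extensionally: zero outside W).\<close>
definition Csl :: "'v::real_normed_vector set \<Rightarrow> ('v \<Rightarrow> real) set" where
  "Csl W = {c. continuous_on W c \<and> (\<forall>w. w \<notin> W \<longrightarrow> c w = 0) \<and>
     (\<forall>e>0. \<exists>R. \<forall>w\<in>W. norm w \<ge> R \<longrightarrow> \<bar>c w\<bar> \<le> e * norm w)}"

definition dual_space :: "('v::real_vector \<Rightarrow> real) set" where
  "dual_space = {\<alpha>. linear \<alpha>}"

definition zeta :: "('v::real_vector \<Rightarrow> 'v) \<Rightarrow> ('v \<Rightarrow> real) \<Rightarrow> ('v \<Rightarrow> real) \<Rightarrow> 'v \<times> real \<Rightarrow> real" where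
  "zeta \<phi> \<alpha> c X = (if snd X \<noteq> 0 then c ((1 / snd X) *\<^sub>R \<phi> (fst X)) * snd X + \<alpha> (fst X)
                     else \<alpha> (fst X))"

definition infinite_dimensional_fun_set :: "('a \<Rightarrow> real) set \<Rightarrow> bool" where
  "infinite_dimensional_fun_set S \<longleftrightarrow>
     (\<forall>n::nat. \<exists>f :: nat \<Rightarrow> 'a \<Rightarrow> real. (\<forall>i<n. f i \<in> S) \<and>
        (\<forall>a :: nat \<Rightarrow> real. (\<forall>x. (\<Sum>i<n. a i * f i x) = 0) \<longrightarrow> (\<forall>i<n. a i = 0)))"

end

(*
  Two elements (v, s), (w, t) of g_phi commute iff s phi(w) = t phi(v). If s or t is nonzero they
  therefore lie in a subspace on which phi(v) = t u for one fixed u, and there zeta_{alpha,c}(v, t)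
  = c(u) t + alpha(v) is linear; if s = t = 0, zeta_{alpha,c} = alpha there. Conversely a
  quasi-state zeta is homogeneous, so alpha = zeta(-, 0) is linear and zeta(v, t) = t zeta(v/t, 1);
  since (v, 1) and (v', 1) commute when phi(v) = phi(v'), c(phi v) = zeta(v, 1) - zeta(v, 0) is well
  defined and zeta = zeta_{alpha,c}. Continuity of zeta at the hyperplane t = 0 corresponds exactly
  to sublinearity of c, by homogeneity and uniform continuity on a compact set. Tent functions c
  with disjoint supports along one line of W give infinitely many independent quasi-states.
*)
theory Submission imports Defs begin

lemma gcommute_Pair_iff: "gcommute \<phi> (v, s) (w, t) \<longleftrightarrow> s *\<^sub>R \<phi> w = t *\<^sub>R \<phi> v"
  by (simp add: gcommute_def gbracket_def zero_prod_def)

lemma gcommute_refl: "gcommute \<phi> X X"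
  by (cases X) (simp add: gcommute_Pair_iff)

lemma gcommute_common_direction:
  assumes "gcommute \<phi> (v, s) (w, t)" and "s \<noteq> 0"
  obtains u where "\<phi> v = s *\<^sub>R u" and "\<phi> w = t *\<^sub>R u"
proof
  let ?u = "(1 / s) *\<^sub>R \<phi> v"
  show v: "\<phi> v = s *\<^sub>R ?u" using assms(2) by simp
  have "\<phi> w = (1 / s) *\<^sub>R (s *\<^sub>R \<phi> w)" using assms(2) by simp
  also have "\<dots> = (1 / s) *\<^sub>R (t *\<^sub>R \<phi> v)" using assms(1) by (simp add: gcommute_Pair_iff)
  finally show "\<phi> w = t *\<^sub>R ?u" by simp
qed

lemma zeta_eq_on_ray:
  assumes "\<phi> x = r *\<^sub>R u"
  shows "zeta \<phi> \<alpha> c (x, r) = c u * r + \<alpha> x"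
  using assms by (simp add: zeta_def)

lemma zeta_linear_combination_ray:
  assumes "linear \<phi>" "linear \<alpha>" "\<phi> v = s *\<^sub>R u" "\<phi> w = t *\<^sub>R u"
  shows "zeta \<phi> \<alpha> c (a *\<^sub>R (v, s) + b *\<^sub>R (w, t)) = a * zeta \<phi> \<alpha> c (v, s) + b * zeta \<phi> \<alpha> c (w, t)"
proof -
  have "\<phi> (a *\<^sub>R v + b *\<^sub>R w) = (a * s + b * t) *\<^sub>R u"
    using assms by (simp add: linear_add linear_scale scaleR_add_left)
  then have "zeta \<phi> \<alpha> c (a *\<^sub>R v + b *\<^sub>R w, a * s + b * t) = c u * (a * s + b * t) + \<alpha> (a *\<^sub>R v + b *\<^sub>R w)"
    by (rule zeta_eq_on_ray)
  moreover have "zeta \<phi> \<alpha> c (v, s) = c u * s + \<alpha> v" "zeta \<phi> \<alpha> c (w, t) = c u * t + \<alpha> w"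
    using assms(3,4) by (simp_all add: zeta_eq_on_ray)
  ultimately show ?thesis using assms(2) by (simp add: linear_add linear_scale algebra_simps)
qed

lemma zeta_linear_on_commuting:
  assumes "linear \<phi>" "linear \<alpha>" "gcommute \<phi> X Y"
  shows "zeta \<phi> \<alpha> c (a *\<^sub>R X + b *\<^sub>R Y) = a * zeta \<phi> \<alpha> c X + b * zeta \<phi> \<alpha> c Y"
proof -
  obtain v s w t where X: "X = (v, s)" and Y: "Y = (w, t)" by (cases X, cases Y)
  consider "s \<noteq> 0" | "t \<noteq> 0" | "s = 0" "t = 0" by blast
  then show ?thesis
  proof cases
    case 1
    then obtain u where "\<phi> v = s *\<^sub>R u" "\<phi> w = t *\<^sub>R u"
      using gcommute_common_direction assms(3) X Y by metis
    then show ?thesis using zeta_linear_combination_ray assms(1,2) X Y by blast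
  next
    case 2
    have "gcommute \<phi> (w, t) (v, s)" using assms(3) X Y by (auto simp: gcommute_Pair_iff)
    then obtain u where "\<phi> w = t *\<^sub>R u" "\<phi> v = s *\<^sub>R u"
      using gcommute_common_direction 2 by metis
    then show ?thesis
      using zeta_linear_combination_ray[OF assms(1,2), where a=b and b=a and c=c] X Y by (simp add: add.commute)
  next
    case 3
    then show ?thesis using assms(2) X Y by (simp add: zeta_def linear_add linear_scale)
  qed
qed

lemma Csl_affine_bound:
  fixes W :: "'v::{real_normed_vector,heine_borel} set"
  assumes "c \<in> Csl W" and "closed W" and "e > 0"
  obtains M where "M \<ge> 0" and "\<And>w. w \<in> W \<Longrightarrow> \<bar>c w\<bar> \<le> e * norm w + M"
proof -
  from assms(1,3) obtain R where R: "\<And>w. w \<in> W \<Longrightarrow> norm w \<ge> R \<Longrightarrow> \<bar>c w\<bar> \<le> e * norm w"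
    unfolding Csl_def by blast
  have "compact (c ` (cball 0 R \<inter> W))"
    using assms(1,2) unfolding Csl_def
    by (intro compact_continuous_image compact_Int_closed) (auto intro: continuous_on_subset)
  then obtain B where B: "\<And>w. w \<in> cball 0 R \<inter> W \<Longrightarrow> \<bar>c w\<bar> \<le> B"
    by (metis compact_imp_bounded bounded_iff image_eqI real_norm_def)
  show thesis
  proof
    fix w assume "w \<in> W"
    moreover have "e * norm w \<ge> 0" using assms(3) by simp
    ultimately show "\<bar>c w\<bar> \<le> e * norm w + max B 0"
      using R[of w] B[of w] by (cases "norm w \<ge> R") auto
  qed simp
qed

lemma zeta_deviation_bound:
  assumes "\<And>w. w \<in> range \<phi> \<Longrightarrow> \<bar>c w\<bar> \<le> e * norm w + M" and "linear \<phi>" and "e \<ge> 0"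
  shows "\<bar>zeta \<phi> \<alpha> c (v, t) - \<alpha> v\<bar> \<le> e * norm (\<phi> v) + M * \<bar>t\<bar>"
proof (cases "t = 0")
  case True then show ?thesis using assms(3) by (simp add: zeta_def)
next
  case False
  have "(1 / t) *\<^sub>R \<phi> v \<in> range \<phi>" using assms(2) by (metis linear_scale rangeI)
  then have "\<bar>c ((1 / t) *\<^sub>R \<phi> v)\<bar> * \<bar>t\<bar> \<le> (e * norm ((1 / t) *\<^sub>R \<phi> v) + M) * \<bar>t\<bar>"
    by (intro mult_right_mono assms(1)) simp_all
  also have "\<dots> = e * norm (\<phi> v) + M * \<bar>t\<bar>" using False by (simp add: field_simps)
  finally show ?thesis using False by (simp add: zeta_def abs_mult)
qed

text \<open>With the affine bound for \<open>c\<close>, \<open>|\<zeta>(v, t) - \<alpha> v|\<close> is at most \<open>e |\<phi> v| + M |t|\<close>, which stays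
  below \<open>\<epsilon>\<close> near \<open>(v0, 0)\<close> once \<open>e |\<phi> v0| < \<epsilon>\<close>.\<close>
lemma isCont_zeta_time_zero:
  fixes \<phi> :: "'v::euclidean_space \<Rightarrow> 'v"
  assumes "linear \<phi>" "linear \<alpha>" "c \<in> Csl (range \<phi>)"
  shows "isCont (zeta \<phi> \<alpha> c) (v0, 0)"
  unfolding isCont_def tendsto_iff
proof (intro allI impI)
  fix \<epsilon> :: real assume "\<epsilon> > 0"
  define e where "e = \<epsilon> / 2 / (norm (\<phi> v0) + 1)"
  have n: "norm (\<phi> v0) + 1 > 0" by (simp add: add_nonneg_pos)
  have e: "e > 0" "e * norm (\<phi> v0) < \<epsilon>"
  proof -
    show "e > 0" using \<open>\<epsilon> > 0\<close> n by (simp add: e_def)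
    then have "e * norm (\<phi> v0) < e * (norm (\<phi> v0) + 1)" by simp
    also have "\<dots> = \<epsilon> / 2" unfolding e_def using n by (simp add: field_simps)
    finally show "e * norm (\<phi> v0) < \<epsilon>" using \<open>\<epsilon> > 0\<close> by simp
  qed
  have "closed (range \<phi>)" using assms(1) by (simp add: closed_subspace linear_subspace_image)
  then obtain M where M: "\<And>w. w \<in> range \<phi> \<Longrightarrow> \<bar>c w\<bar> \<le> e * norm w + M"
    using Csl_affine_bound assms(3) e(1) by blast
  define G where "G X = e * norm (\<phi> (fst X)) + M * \<bar>snd X\<bar> + \<bar>\<alpha> (fst X) - \<alpha> v0\<bar>" for X
  have "isCont G (v0, 0)"
    using assms(1,2) unfolding G_def linear_conv_bounded_linear
    by (intro continuous_intros bounded_linear.continuous[OF _ continuous_fst])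
  moreover have "G (v0, 0) < \<epsilon>" using e by (simp add: G_def)
  ultimately have ev: "eventually (\<lambda>X. G X < \<epsilon>) (at (v0, 0))"
    unfolding isCont_def by (rule order_tendstoD(2))
  have bound: "dist (zeta \<phi> \<alpha> c X) (zeta \<phi> \<alpha> c (v0, 0)) \<le> G X" for X
    using zeta_deviation_bound[OF M assms(1), where v="fst X" and t="snd X" and \<alpha>=\<alpha>] e(1)
    by (simp add: G_def dist_real_def zeta_def[of _ _ _ "(v0, 0)"])
  show "eventually (\<lambda>X. dist (zeta \<phi> \<alpha> c X) (zeta \<phi> \<alpha> c (v0, 0)) < \<epsilon>) (at (v0, 0))"
    using ev by eventually_elim (rule le_less_trans[OF bound])
qed

lemma continuous_on_zeta_time_nonzero:
  fixes \<phi> :: "'v::euclidean_space \<Rightarrow> 'v"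
  assumes "linear \<phi>" "linear \<alpha>" "continuous_on (range \<phi>) c"
  shows "continuous_on {X. snd X \<noteq> 0} (zeta \<phi> \<alpha> c)"
proof -
  have lin: "continuous_on S (\<lambda>X. f (fst X))"
    if "linear f" for S :: "('v \<times> real) set" and f :: "'v \<Rightarrow> 'b::real_normed_vector"
    using bounded_linear_compose[OF that[unfolded linear_conv_bounded_linear] bounded_linear_fst]
    by (rule linear_continuous_on)
  have "(1 / snd X) *\<^sub>R \<phi> (fst X) \<in> range \<phi>" for X
    using assms(1) by (metis linear_scale rangeI)
  then have "continuous_on {X. snd X \<noteq> 0} (\<lambda>X. c ((1 / snd X) *\<^sub>R \<phi> (fst X)) * snd X + \<alpha> (fst X))"
    by (intro continuous_intros continuous_on_compose2[OF assms(3)] lin assms(1,2)) auto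
  then show ?thesis
    by (rule continuous_on_cong[THEN iffD1, rotated 2]) (auto simp: zeta_def)
qed

lemma continuous_on_zeta:
  fixes \<phi> :: "'v::euclidean_space \<Rightarrow> 'v"
  assumes "linear \<phi>" "linear \<alpha>" "c \<in> Csl (range \<phi>)"
  shows "continuous_on UNIV (zeta \<phi> \<alpha> c)"
proof -
  have "isCont (zeta \<phi> \<alpha> c) (v, t)" for v t
  proof (cases "t = 0")
    case True then show ?thesis using isCont_zeta_time_zero[OF assms] by simp
  next
    case False
    have "open {X :: 'v \<times> real. snd X \<noteq> 0}" by (intro open_Collect_neq continuous_intros)
    moreover have "continuous_on (range \<phi>) c" using assms(3) by (simp add: Csl_def)
    ultimately show ?thesis
      using continuous_on_zeta_time_nonzero[OF assms(1,2)] False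
      by (auto simp: continuous_on_eq_continuous_at)
  qed
  then show ?thesis by (auto simp: continuous_on_eq_continuous_at)
qed

lemma zeta_in_lie_quasi_states:
  fixes \<phi> :: "'v::euclidean_space \<Rightarrow> 'v"
  assumes "linear \<phi>" "linear \<alpha>" "c \<in> Csl (range \<phi>)"
  shows "zeta \<phi> \<alpha> c \<in> lie_quasi_states \<phi>"
  unfolding lie_quasi_states_def
  using continuous_on_zeta[OF assms] zeta_linear_on_commuting[OF assms(1,2)] by blast

lemma lie_quasi_state_scaleR:
  assumes "\<zeta> \<in> lie_quasi_states \<phi>"
  shows "\<zeta> (r *\<^sub>R X) = r * \<zeta> X"
proof -
  have "\<zeta> (r *\<^sub>R X + 0 *\<^sub>R X) = r * \<zeta> X + 0 * \<zeta> X"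
    using assms gcommute_refl unfolding lie_quasi_states_def by blast
  then show ?thesis by simp
qed

lemma lie_quasi_state_linear_time_zero:
  assumes "\<zeta> \<in> lie_quasi_states \<phi>"
  shows "linear (\<lambda>v. \<zeta> (v, 0))"
proof (rule linearI)
  fix x y :: 'a
  have "gcommute \<phi> (x, 0) (y, 0)" by (simp add: gcommute_Pair_iff)
  then have "\<zeta> (1 *\<^sub>R (x, 0) + 1 *\<^sub>R (y, 0)) = 1 * \<zeta> (x, 0) + 1 * \<zeta> (y, 0)"
    using assms unfolding lie_quasi_states_def by blast
  then show "\<zeta> (x + y, 0) = \<zeta> (x, 0) + \<zeta> (y, 0)" by simp
next
  fix r and x :: 'a
  show "\<zeta> (r *\<^sub>R x, 0) = r *\<^sub>R \<zeta> (x, 0)"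
    using lie_quasi_state_scaleR[OF assms, of r "(x, 0)"] by simp
qed

lemma lie_quasi_state_fibre:
  assumes "\<zeta> \<in> lie_quasi_states \<phi>" and "\<phi> x = \<phi> y"
  shows "\<zeta> (x, 1) - \<zeta> (x, 0) = \<zeta> (y, 1) - \<zeta> (y, 0)"
proof -
  have "gcommute \<phi> (x, 1) (y, 1)" using assms(2) by (simp add: gcommute_Pair_iff)
  then have "\<zeta> (1 *\<^sub>R (x, 1) + (-1) *\<^sub>R (y, 1)) = 1 * \<zeta> (x, 1) + (-1) * \<zeta> (y, 1)"
    using assms(1) unfolding lie_quasi_states_def by blast
  moreover have "\<zeta> (x - y, 0) = \<zeta> (x, 0) - \<zeta> (y, 0)"
    using linear_diff[OF lie_quasi_state_linear_time_zero[OF assms(1)]] by simp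
  ultimately show ?thesis by simp
qed

lemma lie_quasi_state_eq_zeta:
  assumes "\<zeta> \<in> lie_quasi_states \<phi>" "linear \<phi>" "\<And>w. w \<in> range \<phi> \<Longrightarrow> \<phi> (g w) = w"
  shows "\<zeta> = zeta \<phi> (\<lambda>v. \<zeta> (v, 0)) (\<lambda>w. if w \<in> range \<phi> then \<zeta> (g w, 1) - \<zeta> (g w, 0) else 0)"
proof
  fix X :: "'a \<times> real"
  obtain v t where X: "X = (v, t)" by (cases X)
  show "\<zeta> X = zeta \<phi> (\<lambda>v. \<zeta> (v, 0)) (\<lambda>w. if w \<in> range \<phi> then \<zeta> (g w, 1) - \<zeta> (g w, 0) else 0) X"
  proof (cases "t = 0")
    case True then show ?thesis by (simp add: X zeta_def)
  next
    case False
    define v' where "v' = (1 / t) *\<^sub>R v"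
    have v': "(1 / t) *\<^sub>R \<phi> v = \<phi> v'" using assms(2) by (simp add: v'_def linear_scale)
    have "\<zeta> (g (\<phi> v'), 1) - \<zeta> (g (\<phi> v'), 0) = \<zeta> (v', 1) - \<zeta> (v', 0)"
      using lie_quasi_state_fibre[OF assms(1)] assms(3) by blast
    moreover have "\<zeta> (v, t) = \<zeta> (t *\<^sub>R (v', 1))" "\<zeta> (v, 0) = \<zeta> (t *\<^sub>R (v', 0))"
      using False by (simp_all add: v'_def)
    then have "\<zeta> (v, t) = t * \<zeta> (v', 1)" "\<zeta> (v, 0) = t * \<zeta> (v', 0)"
      unfolding lie_quasi_state_scaleR[OF assms(1)] .
    ultimately show ?thesis using False by (simp add: X zeta_def v' algebra_simps) (metis distrib_left)
  qed
qed

text \<open>Homogeneity rescales a point far out on the slice \<open>t = 1\<close> to a point of the unit sphere on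
  the slice \<open>t = 1 / r\<close>, where uniform continuity compares it with the slice \<open>t = 0\<close>.\<close>
lemma homogeneous_time_difference_sublinear:
  fixes \<psi> :: "'a::{real_normed_vector,heine_borel} \<times> real \<Rightarrow> real"
  assumes "continuous_on UNIV \<psi>" and "\<And>r X. \<psi> (r *\<^sub>R X) = r * \<psi> X" and "e > 0"
  obtains R where "\<And>x. norm x \<ge> R \<Longrightarrow> \<bar>\<psi> (x, 1) - \<psi> (x, 0)\<bar> \<le> e * norm x"
proof -
  let ?K = "cball (0::'a) 1 \<times> cball (0::real) 1"
  have "uniformly_continuous_on ?K \<psi>"
    by (intro compact_uniformly_continuous continuous_on_subset[OF assms(1)] compact_Times) auto
  then obtain d where "d > 0" and d: "\<And>X X'. X \<in> ?K \<Longrightarrow> X' \<in> ?K \<Longrightarrow> dist X' X < d \<Longrightarrow> dist (\<psi> X') (\<psi> X) < e"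
    using assms(3) unfolding uniformly_continuous_on_def by metis
  show thesis
  proof (rule that)
    fix x :: 'a assume x: "1 / d + 1 \<le> norm x"
    define r where "r = norm x"
    have "1 / d > 0" using \<open>d > 0\<close> by simp
    then have "r \<ge> 1" "1 / d < r" using x unfolding r_def by linarith+
    then have r: "r \<ge> 1" "1 / r < d" using \<open>d > 0\<close> by (simp_all add: divide_less_eq mult.commute)
    define u where "u = (1 / r) *\<^sub>R x"
    have "x \<noteq> 0" using r(1) by (auto simp: r_def)
    then have "norm u = 1" by (simp add: u_def r_def)
    then have "dist (\<psi> (u, 1 / r)) (\<psi> (u, 0)) < e"
      using r by (intro d) (simp_all add: dist_Pair_Pair dist_real_def)
    moreover have "\<psi> (x, 1) = r * \<psi> (u, 1 / r)" "\<psi> (x, 0) = r * \<psi> (u, 0)"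
      using assms(2)[of r "(u, 1 / r)"] assms(2)[of r "(u, 0)"] r by (simp_all add: u_def)
    then have "\<bar>\<psi> (x, 1) - \<psi> (x, 0)\<bar> = r * \<bar>\<psi> (u, 1 / r) - \<psi> (u, 0)\<bar>"
      using r by (simp add: abs_mult flip: right_diff_distrib)
    ultimately have "\<bar>\<psi> (x, 1) - \<psi> (x, 0)\<bar> \<le> r * e"
      using r by (simp add: dist_real_def)
    then show "\<bar>\<psi> (x, 1) - \<psi> (x, 0)\<bar> \<le> e * norm x" by (simp add: r_def mult.commute)
  qed
qed

lemma lie_quasi_state_zeta_representation:
  fixes \<phi> :: "'v::euclidean_space \<Rightarrow> 'v"
  assumes "linear \<phi>" and "\<zeta> \<in> lie_quasi_states \<phi>"
  obtains \<alpha> c where "linear \<alpha>" and "c \<in> Csl (range \<phi>)" and "\<zeta> = zeta \<phi> \<alpha> c"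
proof -
  obtain g where "linear g" and g: "\<And>w. w \<in> range \<phi> \<Longrightarrow> \<phi> (g w) = w"
    using linear_exists_right_inverse_on[OF assms(1) subspace_UNIV] by auto
  define \<psi> where "\<psi> X = \<zeta> (g (fst X), snd X)" for X
  define c where "c w = (if w \<in> range \<phi> then \<psi> (w, 1) - \<psi> (w, 0) else 0)" for w
  have bl: "bounded_linear (\<lambda>X. (g (fst X), snd X))"
    using \<open>linear g\<close> unfolding linear_conv_bounded_linear
    by (intro bounded_linear_Pair bounded_linear_compose[OF _ bounded_linear_fst] bounded_linear_snd)
  have "continuous_on UNIV \<zeta>" using assms(2) by (simp add: lie_quasi_states_def)
  then have cont: "continuous_on UNIV \<psi>"
    using continuous_on_compose2[OF _ linear_continuous_on[OF bl], of UNIV \<zeta> UNIV]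
    unfolding \<psi>_def by simp
  have hom: "\<psi> (r *\<^sub>R X) = r * \<psi> X" for r X
    using lie_quasi_state_scaleR[OF assms(2), of r "(g (fst X), snd X)"] \<open>linear g\<close>
    by (simp add: \<psi>_def linear_scale)
  have "\<exists>R. \<forall>w\<in>range \<phi>. norm w \<ge> R \<longrightarrow> \<bar>c w\<bar> \<le> e * norm w" if e: "e > 0" for e
  proof -
    obtain R where "\<And>x. norm x \<ge> R \<Longrightarrow> \<bar>\<psi> (x, 1) - \<psi> (x, 0)\<bar> \<le> e * norm x"
      using homogeneous_time_difference_sublinear[OF cont hom e] by blast
    then show ?thesis by (auto simp: c_def)
  qed
  moreover have "continuous_on (range \<phi>) c"
  proof -
    have "continuous_on (range \<phi>) (\<lambda>w. \<psi> (w, t))" for t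
      by (rule continuous_on_compose2[OF cont]) (auto intro: continuous_intros)
    then have "continuous_on (range \<phi>) (\<lambda>w. \<psi> (w, 1) - \<psi> (w, 0))"
      by (intro continuous_on_diff)
    then show ?thesis by (rule continuous_on_cong[THEN iffD1, rotated 2]) (auto simp: c_def)
  qed
  ultimately have "c \<in> Csl (range \<phi>)" by (auto simp: Csl_def c_def)
  moreover have "\<zeta> = zeta \<phi> (\<lambda>v. \<zeta> (v, 0)) c"
  proof -
    have "c = (\<lambda>w. if w \<in> range \<phi> then \<zeta> (g w, 1) - \<zeta> (g w, 0) else 0)"
      by (auto simp: c_def \<psi>_def)
    then show ?thesis using lie_quasi_state_eq_zeta[OF assms(2,1) g] by simp
  qed
  ultimately show thesis using that lie_quasi_state_linear_time_zero[OF assms(2)] by blast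
qed

lemma zeta_injective:
  assumes "c \<in> Csl (range \<phi>)" "c' \<in> Csl (range \<phi>)" "zeta \<phi> \<alpha> c = zeta \<phi> \<alpha>' c'"
  shows "\<alpha> = \<alpha>'" and "c = c'"
proof -
  show \<alpha>: "\<alpha> = \<alpha>'"
  proof
    fix v show "\<alpha> v = \<alpha>' v" using fun_cong[OF assms(3), of "(v, 0)"] by (simp add: zeta_def)
  qed
  show "c = c'"
  proof
    fix w show "c w = c' w"
    proof (cases "w \<in> range \<phi>")
      case True
      then obtain v where "w = \<phi> v" by auto
      then show ?thesis using fun_cong[OF assms(3), of "(v, 1)"] \<alpha> by (simp add: zeta_def)
    next
      case False then show ?thesis using assms(1,2) by (simp add: Csl_def)
    qed
  qed
qed

lemma infinite_dimensional_fun_setI: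
  fixes f :: "nat \<Rightarrow> 'a \<Rightarrow> real" and x :: "nat \<Rightarrow> 'a"
  assumes "\<And>i. f i \<in> S" and "\<And>i j. f i (x j) = (if i = j then 1 else 0)"
  shows "infinite_dimensional_fun_set S"
  unfolding infinite_dimensional_fun_set_def
proof (intro allI exI[of _ f] conjI impI)
  fix n and a :: "nat \<Rightarrow> real" and j
  assume "\<forall>y. (\<Sum>i<n. a i * f i y) = 0" and "j < n"
  moreover have "(\<Sum>i<n. a i * f i (x j)) = a j"
    using \<open>j < n\<close> by (simp add: assms(2) if_distrib cong: if_cong)
  ultimately show "a j = 0" by simp
qed (use assms(1) in blast)

lemma bounded_continuous_in_Csl:
  assumes "continuous_on W c" and "\<And>w. w \<notin> W \<Longrightarrow> c w = 0" and "\<And>w. \<bar>c w\<bar> \<le> B"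
  shows "c \<in> Csl W"
proof -
  have "\<bar>c w\<bar> \<le> e * norm w" if "e > 0" "norm w \<ge> B / e" for e w
    using assms(3)[of w] that by (simp add: divide_le_eq mult.commute)
  then show ?thesis using assms(1,2) unfolding Csl_def by blast
qed

text \<open>The tent functions \<open>bump i\<close> of the coordinate along \<open>\<phi> v0\<close>, centred at the integers, give
  quasi-states whose values at the points \<open>(j v0, 1)\<close> form the identity matrix.\<close>
lemma infinite_dimensional_lie_quasi_states:
  fixes \<phi> :: "'v::euclidean_space \<Rightarrow> 'v"
  assumes "linear \<phi>" and "\<phi> \<noteq> (\<lambda>v. 0)"
  shows "infinite_dimensional_fun_set (lie_quasi_states \<phi>)"
proof -
  obtain v0 where "\<phi> v0 \<noteq> 0" using assms(2) by auto
  define w0 where "w0 = \<phi> v0"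
  have "w0 \<bullet> w0 \<noteq> 0" using \<open>\<phi> v0 \<noteq> 0\<close> by (simp add: w0_def)
  define tent :: "real \<Rightarrow> real" where "tent x = max 0 (1 - \<bar>x\<bar>)" for x
  define bump where "bump i w = (if w \<in> range \<phi> then tent ((w \<bullet> w0) / (w0 \<bullet> w0) - real i) else 0)" for i w
  have "bump i \<in> Csl (range \<phi>)" for i
  proof (rule bounded_continuous_in_Csl[where B = 1])
    have "continuous_on (range \<phi>) (\<lambda>w. tent ((w \<bullet> w0) / (w0 \<bullet> w0) - real i))"
      using \<open>w0 \<bullet> w0 \<noteq> 0\<close> unfolding tent_def by (intro continuous_intros) auto
    then show "continuous_on (range \<phi>) (bump i)"
      by (rule continuous_on_cong[THEN iffD1, rotated 2]) (auto simp: bump_def)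
  qed (auto simp: bump_def tent_def)
  then have "zeta \<phi> (\<lambda>v. 0) (bump i) \<in> lie_quasi_states \<phi>" for i
    using zeta_in_lie_quasi_states[OF assms(1) linear_zero] by blast
  moreover have "zeta \<phi> (\<lambda>v. 0) (bump i) (real j *\<^sub>R v0, 1) = (if i = j then 1 else 0)" for i j
  proof -
    have "\<phi> (real j *\<^sub>R v0) = real j *\<^sub>R w0" using assms(1) by (simp add: linear_scale w0_def)
    moreover from this have "real j *\<^sub>R w0 \<in> range \<phi>" by (metis rangeI)
    moreover have "tent (real j - real i) = (if i = j then 1 else 0)"
      by (cases "i = j") (auto simp: tent_def)
    ultimately show ?thesis using \<open>w0 \<bullet> w0 \<noteq> 0\<close> by (simp add: zeta_def bump_def tent_def)
  qed
  ultimately show ?thesis by (rule infinite_dimensional_fun_setI)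
qed

theorem mainTheorem10:
  fixes \<phi> :: "'v::euclidean_space \<Rightarrow> 'v"
  assumes "linear \<phi>" and "\<phi> \<noteq> (\<lambda>v. 0)"
  shows "(\<forall>(a::real) (b::real) \<alpha> c \<alpha>' c'.
            zeta \<phi> (\<lambda>v. a * \<alpha> v + b * \<alpha>' v) (\<lambda>w. a * c w + b * c' w)
              = (\<lambda>X. a * zeta \<phi> \<alpha> c X + b * zeta \<phi> \<alpha>' c' X))
         \<and> bij_betw (\<lambda>(\<alpha>, c). zeta \<phi> \<alpha> c) (dual_space \<times> Csl (range \<phi>)) (lie_quasi_states \<phi>)
         \<and> infinite_dimensional_fun_set (lie_quasi_states \<phi>)"
proof (intro conjI allI)
  show "zeta \<phi> (\<lambda>v. a * \<alpha> v + b * \<alpha>' v) (\<lambda>w. a * c w + b * c' w)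
          = (\<lambda>X. a * zeta \<phi> \<alpha> c X + b * zeta \<phi> \<alpha>' c' X)" for a b \<alpha> c \<alpha>' c'
    by (rule ext) (simp add: zeta_def algebra_simps)
  have "inj_on (\<lambda>(\<alpha>, c). zeta \<phi> \<alpha> c) (dual_space \<times> Csl (range \<phi>))"
    by (rule inj_onI) (auto dest: zeta_injective)
  moreover have "(\<lambda>(\<alpha>, c). zeta \<phi> \<alpha> c) ` (dual_space \<times> Csl (range \<phi>)) = lie_quasi_states \<phi>"
  proof (intro equalityI subsetI)
    fix \<zeta> assume "\<zeta> \<in> lie_quasi_states \<phi>"
    then obtain \<alpha> c where "linear \<alpha>" "c \<in> Csl (range \<phi>)" "\<zeta> = zeta \<phi> \<alpha> c"
      using lie_quasi_state_zeta_representation[OF assms(1)] by blast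
    then show "\<zeta> \<in> (\<lambda>(\<alpha>, c). zeta \<phi> \<alpha> c) ` (dual_space \<times> Csl (range \<phi>))"
      by (auto simp: dual_space_def)
  qed (auto simp: dual_space_def intro: zeta_in_lie_quasi_states[OF assms(1)])
  ultimately show "bij_betw (\<lambda>(\<alpha>, c). zeta \<phi> \<alpha> c) (dual_space \<times> Csl (range \<phi>)) (lie_quasi_states \<phi>)"
    by (simp add: bij_betw_def)
  show "infinite_dimensional_fun_set (lie_quasi_states \<phi>)"
    using infinite_dimensional_lie_quasi_states[OF assms] .
qed

end
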